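(* Fix an integer $n\ge1$ and $p\in(0,1]$. The optimal robust ratio $\gamma_n^*=\gamma_n^*(p)$ equals the optimal value of the linear program $(LP)_{n,p}$: \[ \max_{\mathbf x\ge 0,\ \gamma}\ \gamma\quad\text{s.t.}\quad x_{t,s}\le \frac1t\Big(1-p\sum_{\tau=1}^{t-1}\sum_{\sigma=1}^{\tau}x_{\tau,\sigma}\Big)\ \ \forall t\in[n],s\in[t];\qquad \gamma\le \frac{p}{1-(1-p)^k}\sum_{t=1}^n\sum_{s=1}^t x_{t,s}\,\Pr(R_t\le k\mid r_t=s)\ \ \forall k\in[n], \] where $\Pr(R_t\le k\mid r_t=s)=\sum_{i=s}^{\min(k,\,n-t+s)}\binom{i-1}{s-1}\binom{n-i}{t-s}\big/\binom{n}{t}$. Moreover, if $(\mathbf x^*,\gamma_n^* )$ is an optimal solution of $(LP)_{n,p}$, then the randomized policy that in state $(t,s)$ makes an offer with probability $t x^*_{t,s}\big/\big(1-p\sum_{\tau=1}^{t-1}\sum_{\sigma=1}^{\tau}x^*_{\tau,\sigma}\big)$ is $\gamma_n^*$-robust.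
   Context: SP-UA model: fix $n\ge1$, $p\in(0,1]$; $n$ candidates with distinct overall ranks $1,\dots,n$ ($1$ best) arrive in uniformly random order; $R_t$ is the overall rank of the $t$-th arrival and $r_t\in[t]$ its rank among the first $t$ arrivals. At each time the decision maker, seeing $r_1,\dots,r_t$, irrevocably either makes an offer (possibly randomly) or passes; an offered candidate accepts independently with probability $p$ (process stops) or rejects (process continues). State $(t,s)$: examining candidate $t$ with $r_t=s$. A policy $\mathcal P$ collects a candidate of rank $i$ if it makes an offer to that candidate and she accepts. The robust ratio of $\mathcal P$ is $\gamma_{\mathcal P}=\min_{k\in[n]}\Pr(\mathcal P\text{ collects a candidate with rank}\le k)/(1-(1-p)^k)$; $\gamma_n^*(p)=\sup_{\mathcal P}\gamma_{\mathcal P}$, and $\mathcal P$ is $\gamma$-robust if $\gamma\le\gamma_{\mathcal P}$. *)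

theory Defs
  imports "HOL-Analysis.Analysis" "HOL-Combinatorics.Multiset_Permutations"
begin

text \<open>An arrival order is a list sigma (a permutation of 1..n): sigma ! (t-1) = R_t,
  the overall rank of the t-th arrival (rank 1 is best).\<close>

text \<open>Relative rank r_t of the arrival at 0-based position j, among the first j+1 arrivals.\<close>
definition relrank :: "nat list \<Rightarrow> nat \<Rightarrow> nat" where
  "relrank \<sigma> j = card {i. i \<le> j \<and> \<sigma> ! i \<le> \<sigma> ! j}"

text \<open>A (randomized, history dependent) policy: given the relative ranks r_1..r_t observed
  so far and the list of its own past actions (True = offer made and rejected,
  False = passed) at times 1..t-1, it returns the probability of making an offer
  to candidate t.\<close>
type_synonym policy = "nat list \<Rightarrow> bool list \<Rightarrow> real"

definition policies :: "policy set" where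
  "policies = {P. \<forall>rs acts. 0 \<le> P rs acts \<and> P rs acts \<le> 1}"

text \<open>Probability, for a fixed arrival order sigma, that policy P (starting after the
  history acts) collects a candidate of overall rank \<le> k.\<close>
function win :: "real \<Rightarrow> policy \<Rightarrow> nat list \<Rightarrow> nat \<Rightarrow> bool list \<Rightarrow> real" where
  "win p P \<sigma> k acts =
     (if length \<sigma> \<le> length acts then 0 else
        (let t = length acts;
             rs = map (relrank \<sigma>) [0..<Suc t];
             q = P rs acts
         in q * (p * (if \<sigma> ! t \<le> k then 1 else 0) + (1 - p) * win p P \<sigma> k (acts @ [True]))
            + (1 - q) * win p P \<sigma> k (acts @ [False])))"
  by pat_completeness auto
termination
  by (relation "Wellfounded.measure (\<lambda>(p, P, \<sigma>, k, acts). length \<sigma> - length acts)") auto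

definition collect_prob :: "nat \<Rightarrow> real \<Rightarrow> policy \<Rightarrow> nat \<Rightarrow> real" where
  "collect_prob n p P k =
     (\<Sum>\<sigma>\<in>permutations_of_set {1..n}. win p P \<sigma> k []) / fact n"

definition robust_ratio :: "nat \<Rightarrow> real \<Rightarrow> policy \<Rightarrow> real" where
  "robust_ratio n p P = (MIN k\<in>{1..n}. collect_prob n p P k / (1 - (1 - p) ^ k))"

definition opt_robust_ratio :: "nat \<Rightarrow> real \<Rightarrow> real" where
  "opt_robust_ratio n p = (SUP P\<in>policies. robust_ratio n p P)"

definition is_robust :: "nat \<Rightarrow> real \<Rightarrow> real \<Rightarrow> policy \<Rightarrow> bool" where
  "is_robust n p \<gamma> P \<longleftrightarrow> \<gamma> \<le> robust_ratio n p P"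

definition cond_prob :: "nat \<Rightarrow> nat \<Rightarrow> nat \<Rightarrow> nat \<Rightarrow> real" where
  "cond_prob n t s k =
     (\<Sum>i=s..min k (n - t + s). real ((i - 1) choose (s - 1)) * real ((n - i) choose (t - s)))
       / real (n choose t)"

definition lp_feasible :: "nat \<Rightarrow> real \<Rightarrow> (nat \<Rightarrow> nat \<Rightarrow> real) \<Rightarrow> real \<Rightarrow> bool" where
  "lp_feasible n p x \<gamma> \<longleftrightarrow>
     (\<forall>t\<in>{1..n}. \<forall>s\<in>{1..t}. 0 \<le> x t s) \<and>
     (\<forall>t\<in>{1..n}. \<forall>s\<in>{1..t}.
        x t s \<le> (1 / real t) * (1 - p * (\<Sum>\<tau>=1..t-1. \<Sum>\<sigma>=1..\<tau>. x \<tau> \<sigma>))) \<and>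
     (\<forall>k\<in>{1..n}.
        \<gamma> \<le> p / (1 - (1 - p) ^ k) * (\<Sum>t=1..n. \<Sum>s=1..t. x t s * cond_prob n t s k))"

definition lp_value :: "nat \<Rightarrow> real \<Rightarrow> real" where
  "lp_value n p = Sup {\<gamma>. \<exists>x. lp_feasible n p x \<gamma>}"

definition lp_optimal :: "nat \<Rightarrow> real \<Rightarrow> (nat \<Rightarrow> nat \<Rightarrow> real) \<Rightarrow> real \<Rightarrow> bool" where
  "lp_optimal n p x \<gamma> \<longleftrightarrow> lp_feasible n p x \<gamma> \<and> (\<forall>x' \<gamma>'. lp_feasible n p x' \<gamma>' \<longrightarrow> \<gamma>' \<le> \<gamma>)"

definition lp_policy :: "real \<Rightarrow> (nat \<Rightarrow> nat \<Rightarrow> real) \<Rightarrow> policy" where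
  "lp_policy p x rs acts =
     (let t = length rs; s = last rs in
        real t * x t s / (1 - p * (\<Sum>\<tau>=1..t-1. \<Sum>\<sigma>=1..\<tau>. x \<tau> \<sigma>)))"

end

theory Submission
  imports Defs
begin

text \<open>For a policy, let \<open>x\<^sub>t\<^sub>,\<^sub>s\<close> be the probability that it makes an offer to candidate \<open>t\<close>
  while \<open>r\<^sub>t = s\<close>. Whether the policy is still running at time \<open>t\<close> is decided by
  \<open>r\<^sub>1, \<dots>, r\<^sub>t\<^sub>-\<^sub>1\<close> and its own coins, while \<open>r\<^sub>t\<close> is uniform on \<open>[t]\<close> and independent of
  them; so \<open>x\<^sub>t\<^sub>,\<^sub>s\<close> is at most \<open>1/t\<close> times the probability of running at \<open>t\<close>, which is
  \<open>1 - p \<Sum>\<^sub>\<tau>\<^sub><\<^sub>t \<Sum>\<^sub>\<sigma> x\<^sub>\<tau>\<^sub>,\<^sub>\<sigma>\<close>. Given \<open>r\<^sub>1, \<dots>, r\<^sub>t\<close>, the overall rank \<open>R\<^sub>t\<close> depends only on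
  \<open>r\<^sub>t\<close>, hence the policy collects a candidate of rank \<open>\<le> k\<close> with probability
  \<open>p \<Sum>\<^sub>t\<^sub>,\<^sub>s x\<^sub>t\<^sub>,\<^sub>s Pr(R\<^sub>t \<le> k | r\<^sub>t = s)\<close>. Thus \<open>x\<close> together with the robust ratio is
  feasible for the LP. Conversely, the policy that offers in state \<open>(t, s)\<close> with probability
  \<open>t x\<^sub>t\<^sub>,\<^sub>s / (1 - p \<Sum>\<^sub>\<tau>\<^sub><\<^sub>t \<Sum>\<^sub>\<sigma> x\<^sub>\<tau>\<^sub>,\<^sub>\<sigma>)\<close> realizes the frequencies \<open>x\<close> of any
  feasible point exactly, so its robust ratio is at least the point's \<open>\<gamma>\<close>.\<close>

section \<open>Relative ranks\<close>

definition rel_ranks :: "nat list \<Rightarrow> nat list" where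
  "rel_ranks xs = map (relrank xs) [0..<length xs]"

lemma length_rel_ranks[simp]: "length (rel_ranks xs) = length xs"
  by (simp add: rel_ranks_def)

lemma nth_rel_ranks[simp]: "j < length xs \<Longrightarrow> rel_ranks xs ! j = relrank xs j"
  by (simp add: rel_ranks_def)

lemma relrank_take: "i < m \<Longrightarrow> relrank (take m xs) i = relrank xs i"
  unfolding relrank_def by (rule arg_cong[where f=card]) auto

lemma take_rel_ranks: "m \<le> length xs \<Longrightarrow> take m (rel_ranks xs) = rel_ranks (take m xs)"
proof (rule nth_equalityI)
  assume "m \<le> length xs"
  thus "length (take m (rel_ranks xs)) = length (rel_ranks (take m xs))" by simp
  fix i assume "i < length (take m (rel_ranks xs))"
  with \<open>m \<le> length xs\<close> have "i < m" "i < length xs" by auto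
  thus "take m (rel_ranks xs) ! i = rel_ranks (take m xs) ! i" by (simp add: relrank_take)
qed

lemma relrank_map_strict_mono:
  assumes "strict_mono_on (set xs) g" "j < length xs"
  shows "relrank (map g xs) j = relrank xs j"
proof -
  have "{i. i \<le> j \<and> map g xs ! i \<le> map g xs ! j} = {i. i \<le> j \<and> xs ! i \<le> xs ! j}"
    using assms by (auto simp: strict_mono_on_less_eq)
  thus ?thesis unfolding relrank_def by simp
qed

lemma rel_ranks_map_strict_mono: "strict_mono_on (set xs) g \<Longrightarrow> rel_ranks (map g xs) = rel_ranks xs"
  by (rule nth_equalityI) (auto simp: relrank_map_strict_mono)

lemma relrank_bounds:
  assumes "j < length xs"
  shows "1 \<le> relrank xs j" "relrank xs j \<le> Suc j"
proof -
  have fin: "finite {i. i \<le> j \<and> xs ! i \<le> xs ! j}" by (rule finite_subset[of _ "{..j}"]) auto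
  have "j \<in> {i. i \<le> j \<and> xs ! i \<le> xs ! j}" by simp
  hence "0 < card {i. i \<le> j \<and> xs ! i \<le> xs ! j}" using fin by (auto simp: card_gt_0_iff)
  thus "1 \<le> relrank xs j" unfolding relrank_def by simp
  have "card {i. i \<le> j \<and> xs ! i \<le> xs ! j} \<le> card {..j}" by (rule card_mono) auto
  thus "relrank xs j \<le> Suc j" unfolding relrank_def by simp
qed

lemma relrank_last:
  assumes "distinct xs" "Suc j = length xs"
  shows "relrank xs j = card {y\<in>set xs. y \<le> xs ! j}"
proof -
  let ?S = "{i\<in>{..<length xs}. xs ! i \<le> xs ! j}"
  have e1: "{i. i \<le> j \<and> xs ! i \<le> xs ! j} = ?S"
    using assms by auto
  have e2: "(!) xs ` ?S = {y\<in>set xs. y \<le> xs ! j}"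
    by (auto simp: set_conv_nth)
  have inj: "inj_on ((!) xs) ?S"
    by (rule inj_on_nth[OF assms(1)]) auto
  have "card ((!) xs ` ?S) = card ?S" by (rule card_image[OF inj])
  thus ?thesis unfolding relrank_def e1 e2 by simp
qed

section \<open>Sums over arrival orders\<close>

definition arrangements :: "nat \<Rightarrow> nat set \<Rightarrow> nat list set" where
  "arrangements m V = {xs. distinct xs \<and> set xs \<subseteq> V \<and> length xs = m}"

lemma finite_arrangements: "finite V \<Longrightarrow> finite (arrangements m V)"
  unfolding arrangements_def by (rule finite_subset[OF _ finite_lists_length_eq[of V m]]) auto

lemma sum_arrangements_by_set:
  assumes "finite V"
  shows "(\<Sum>xs\<in>arrangements m V. h xs) = (\<Sum>A\<in>{A. A \<subseteq> V \<and> card A = m}. \<Sum>xs\<in>permutations_of_set A. h xs)"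
proof -
  have fT: "finite {A. A \<subseteq> V \<and> card A = m}" using assms by auto
  have "(\<Sum>xs\<in>arrangements m V. h xs) = (\<Sum>A\<in>{A. A \<subseteq> V \<and> card A = m}. \<Sum>xs\<in>{xs\<in>arrangements m V. set xs = A}. h xs)"
    by (rule sum.group[symmetric, OF finite_arrangements[OF assms] fT])
       (auto simp: arrangements_def distinct_card)
  also have "\<dots> = (\<Sum>A\<in>{A. A \<subseteq> V \<and> card A = m}. \<Sum>xs\<in>permutations_of_set A. h xs)"
    by (rule sum.cong[OF refl], rule sum.cong)
       (auto simp: arrangements_def permutations_of_set_def distinct_card)
  finally show ?thesis .
qed

lemma strict_mono_on_card_le:
  fixes A :: "nat set"
  assumes "finite A"
  shows "strict_mono_on A (\<lambda>a. card {y\<in>A. y \<le> a})"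
proof (rule strict_mono_onI)
  fix a b assume ab: "a \<in> A" "b \<in> A" "a < b"
  have "b \<in> {y\<in>A. y \<le> b} - {y\<in>A. y \<le> a}" "{y\<in>A. y \<le> a} \<subseteq> {y\<in>A. y \<le> b}" using ab by auto
  hence "{y\<in>A. y \<le> a} \<subset> {y\<in>A. y \<le> b}" by blast
  thus "card {y\<in>A. y \<le> a} < card {y\<in>A. y \<le> b}" using assms by (intro psubset_card_mono) auto
qed

lemma image_card_le:
  fixes A :: "nat set"
  assumes "finite A"
  shows "(\<lambda>a. card {y\<in>A. y \<le> a}) ` A = {1..card A}"
proof (rule card_subset_eq)
  show "(\<lambda>a. card {y\<in>A. y \<le> a}) ` A \<subseteq> {1..card A}"
    using assms by (auto simp: Suc_le_eq card_gt_0_iff intro!: card_mono)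
  show "card ((\<lambda>a. card {y\<in>A. y \<le> a}) ` A) = card {1..card A}"
    using strict_mono_on_imp_inj_on[OF strict_mono_on_card_le[OF assms]] by (simp add: card_image)
qed simp

text \<open>Compressing the values of \<open>A\<close> to \<open>{1..card A}\<close> preserves relative ranks, so
  only \<open>card A\<close> matters.\<close>
lemma sum_permutations_rel_ranks:
  assumes "finite A" "card A = m"
  shows "(\<Sum>ys\<in>permutations_of_set A. G (rel_ranks ys)) = (\<Sum>\<rho>\<in>permutations_of_set {1..m}. G (rel_ranks \<rho>))"
proof -
  define g where "g a = card {y\<in>A. y \<le> a}" for a
  have sm: "strict_mono_on A g" unfolding g_def by (rule strict_mono_on_card_le[OF assms(1)])
  hence inj: "inj_on g A" by (rule strict_mono_on_imp_inj_on)
  have "permutations_of_set {1..m} = map g ` permutations_of_set A"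
    using permutations_of_set_image_inj[OF inj] image_card_le[OF assms(1)] assms(2) by (simp add: g_def)
  moreover have "inj_on (map g) (permutations_of_set A)"
    by (rule inj_on_mapI, rule inj_on_subset[OF inj]) (auto simp: permutations_of_set_def)
  ultimately have "(\<Sum>\<rho>\<in>permutations_of_set {1..m}. G (rel_ranks \<rho>)) =
      (\<Sum>ys\<in>permutations_of_set A. G (rel_ranks (map g ys)))"
    by (simp add: sum.reindex)
  also have "\<dots> = (\<Sum>ys\<in>permutations_of_set A. G (rel_ranks ys))"
    by (rule sum.cong[OF refl], rule arg_cong[where f=G], rule rel_ranks_map_strict_mono)
       (use sm in \<open>auto simp: permutations_of_set_def\<close>)
  finally show ?thesis by simp
qed

lemma sum_arrangements_rel_ranks:
  fixes G :: "nat list \<Rightarrow> real" and \<Phi> :: "nat set \<Rightarrow> real"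
  assumes "finite V"
  shows "(\<Sum>xs\<in>arrangements m V. G (rel_ranks xs) * \<Phi> (set xs)) =
     (\<Sum>A\<in>{A. A \<subseteq> V \<and> card A = m}. \<Phi> A) * (\<Sum>\<rho>\<in>permutations_of_set {1..m}. G (rel_ranks \<rho>))"
proof -
  have "(\<Sum>xs\<in>arrangements m V. G (rel_ranks xs) * \<Phi> (set xs)) =
     (\<Sum>A\<in>{A. A \<subseteq> V \<and> card A = m}. \<Sum>xs\<in>permutations_of_set A. G (rel_ranks xs) * \<Phi> A)"
    unfolding sum_arrangements_by_set[OF assms]
    by (rule sum.cong[OF refl], rule sum.cong) (auto simp: permutations_of_set_def)
  also have "\<dots> = (\<Sum>A\<in>{A. A \<subseteq> V \<and> card A = m}. \<Phi> A * (\<Sum>\<rho>\<in>permutations_of_set {1..m}. G (rel_ranks \<rho>)))"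
  proof (rule sum.cong[OF refl])
    fix A assume A: "A \<in> {A. A \<subseteq> V \<and> card A = m}"
    hence fA: "finite A" using assms finite_subset by blast
    have "(\<Sum>xs\<in>permutations_of_set A. G (rel_ranks xs) * \<Phi> A) = (\<Sum>xs\<in>permutations_of_set A. G (rel_ranks xs)) * \<Phi> A"
      by (simp add: sum_distrib_right)
    also have "(\<Sum>xs\<in>permutations_of_set A. G (rel_ranks xs)) = (\<Sum>\<rho>\<in>permutations_of_set {1..m}. G (rel_ranks \<rho>))"
      by (rule sum_permutations_rel_ranks[OF fA]) (use A in simp)
    finally show "(\<Sum>xs\<in>permutations_of_set A. G (rel_ranks xs) * \<Phi> A) = \<Phi> A * (\<Sum>\<rho>\<in>permutations_of_set {1..m}. G (rel_ranks \<rho>))"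
      by simp
  qed
  finally show ?thesis by (simp add: sum_distrib_right)
qed

lemma permutations_with_prefix:
  assumes "xs \<in> arrangements m V"
  shows "{\<sigma>\<in>permutations_of_set V. take m \<sigma> = xs} = (\<lambda>zs. xs @ zs) ` permutations_of_set (V - set xs)"
proof safe
  fix \<sigma> assume s: "\<sigma> \<in> permutations_of_set V" "xs = take m \<sigma>"
  have "\<sigma> = take m \<sigma> @ drop m \<sigma>" by simp
  moreover have "drop m \<sigma> \<in> permutations_of_set (V - set (take m \<sigma>))"
  proof
    have d: "distinct (take m \<sigma> @ drop m \<sigma>)" using s permutations_of_setD(2) by simp
    show "distinct (drop m \<sigma>)" using d by simp
    have "set (take m \<sigma>) \<union> set (drop m \<sigma>) = V" using s(1)
      by (metis permutations_of_setD(1) set_append append_take_drop_id)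
    moreover have "set (take m \<sigma>) \<inter> set (drop m \<sigma>) = {}" using d unfolding distinct_append by blast
    ultimately show "set (drop m \<sigma>) = V - set (take m \<sigma>)" by blast
  qed
  ultimately show "\<sigma> \<in> (@) (take m \<sigma>) ` permutations_of_set (V - set (take m \<sigma>))" by blast
next
  fix zs assume z: "zs \<in> permutations_of_set (V - set xs)"
  show "xs @ zs \<in> permutations_of_set V"
    using z assms by (auto simp: permutations_of_set_def arrangements_def)
  show "take m (xs @ zs) = xs" using assms by (simp add: arrangements_def)
qed

lemma card_permutations_with_prefix:
  assumes "finite V" "xs \<in> arrangements m V"
  shows "card {\<sigma>\<in>permutations_of_set V. take m \<sigma> = xs} = fact (card V - m)"
proof -
  have xs: "set xs \<subseteq> V" "distinct xs" "length xs = m" using assms(2) by (auto simp: arrangements_def)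
  have "card ((\<lambda>zs. xs @ zs) ` permutations_of_set (V - set xs)) = card (permutations_of_set (V - set xs))"
    by (rule card_image) (auto simp: inj_on_def)
  also have "\<dots> = fact (card V - m)"
    using assms(1) xs by (simp add: card_Diff_subset finite_subset distinct_card)
  finally show ?thesis using permutations_with_prefix[OF assms(2)] by simp
qed

lemma take_permutation_in_arrangements:
  assumes "\<sigma> \<in> permutations_of_set V" "m \<le> card V"
  shows "take m \<sigma> \<in> arrangements m V"
proof -
  have "length \<sigma> = card V" by (rule length_finite_permutations_of_set[OF assms(1)])
  moreover have "distinct \<sigma>" "set \<sigma> = V" using assms(1) by (auto dest: permutations_of_setD)
  ultimately show ?thesis using assms(2) by (auto simp: arrangements_def dest: in_set_takeD)
qed

lemma sum_permutations_prefix: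
  fixes F :: "nat list \<Rightarrow> real"
  assumes "finite V" "m \<le> card V"
  shows "(\<Sum>\<sigma>\<in>permutations_of_set V. F (take m \<sigma>)) = fact (card V - m) * (\<Sum>xs\<in>arrangements m V. F xs)"
proof -
  have "(\<Sum>\<sigma>\<in>permutations_of_set V. F (take m \<sigma>)) =
        (\<Sum>xs\<in>arrangements m V. \<Sum>\<sigma>\<in>{\<sigma>\<in>permutations_of_set V. take m \<sigma> = xs}. F (take m \<sigma>))"
    using take_permutation_in_arrangements[OF _ assms(2)]
    by (intro sum.group[symmetric] finite_arrangements[OF assms(1)]) auto
  also have "\<dots> = (\<Sum>xs\<in>arrangements m V. fact (card V - m) * F xs)"
    using card_permutations_with_prefix[OF assms(1)] by (intro sum.cong refl) simp
  finally show ?thesis by (simp add: sum_distrib_left)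
qed

lemma fact_diff_mult_choose:
  assumes "m \<le> n"
  shows "fact (n - m) * real (n choose m) = fact n / fact m"
  using binomial_fact[OF assms, where 'a=real] by (simp add: field_simps)

lemma sum_permutations_rel_ranks_prefix:
  fixes G :: "nat list \<Rightarrow> real"
  assumes "m \<le> n"
  shows "(\<Sum>\<sigma>\<in>permutations_of_set {1..n}. G (take m (rel_ranks \<sigma>))) =
         fact n / fact m * (\<Sum>\<rho>\<in>permutations_of_set {1..m}. G (rel_ranks \<rho>))"
proof -
  have "(\<Sum>\<sigma>\<in>permutations_of_set {1..n}. G (take m (rel_ranks \<sigma>))) =
        (\<Sum>\<sigma>\<in>permutations_of_set {1..n}. G (rel_ranks (take m \<sigma>)))"
    by (rule sum.cong[OF refl]) (use assms in \<open>auto simp: take_rel_ranks length_finite_permutations_of_set\<close>)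
  also have "\<dots> = fact (n - m) * (\<Sum>xs\<in>arrangements m {1..n}. G (rel_ranks xs) * (\<lambda>_. 1) (set xs))"
    using sum_permutations_prefix[of "{1..n}" m "\<lambda>xs. G (rel_ranks xs)"] assms by simp
  also have "\<dots> = fact (n - m) * (real (n choose m) * (\<Sum>\<rho>\<in>permutations_of_set {1..m}. G (rel_ranks \<rho>)))"
    using sum_arrangements_rel_ranks[where V="{1..n}" and m=m and G=G and \<Phi>="\<lambda>_. 1"] n_subsets[of "{1..n}" m] by simp
  also have "\<dots> = fact n / fact m * (\<Sum>\<rho>\<in>permutations_of_set {1..m}. G (rel_ranks \<rho>))"
    using fact_diff_mult_choose[OF assms] by (simp only: mult.assoc[symmetric])
  finally show ?thesis .
qed

lemma length_perm_interval: "\<sigma> \<in> permutations_of_set {1..n} \<Longrightarrow> length \<sigma> = n"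
  using length_finite_permutations_of_set by fastforce

lemma rel_rank_last_permutation:
  assumes "\<rho> \<in> permutations_of_set {1..Suc j}"
  shows "rel_ranks \<rho> ! j = \<rho> ! j"
proof -
  have len: "length \<rho> = Suc j" using assms by (rule length_perm_interval)
  have d: "distinct \<rho>" and st: "set \<rho> = {1..Suc j}" using assms by (auto dest: permutations_of_setD)
  have "\<rho> ! j \<in> {1..Suc j}" using st len by (metis lessI nth_mem)
  hence "{y\<in>set \<rho>. y \<le> \<rho> ! j} = {1..\<rho> ! j}" using st by auto
  thus ?thesis using relrank_last[OF d] len by simp
qed

lemma permutations_with_last:
  assumes "s \<in> V"
  shows "{\<rho>\<in>permutations_of_set V. last \<rho> = s} = (\<lambda>ys. ys @ [s]) ` permutations_of_set (V - {s})"
proof safe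
  fix \<rho> assume \<rho>: "\<rho> \<in> permutations_of_set V" "s = last \<rho>"
  have "\<rho> \<noteq> []" using \<rho>(1) assms by (auto dest: permutations_of_setD)
  hence split: "\<rho> = butlast \<rho> @ [last \<rho>]" by simp
  have "distinct (butlast \<rho> @ [last \<rho>])" "set (butlast \<rho> @ [last \<rho>]) = V"
    using \<rho>(1) by (subst (asm) split; auto dest: permutations_of_setD)+
  hence "butlast \<rho> \<in> permutations_of_set (V - {last \<rho>})" by auto
  thus "\<rho> \<in> (\<lambda>ys. ys @ [last \<rho>]) ` permutations_of_set (V - {last \<rho>})"
    using split by blast
next
  fix ys assume "ys \<in> permutations_of_set (V - {s})"
  thus "ys @ [s] \<in> permutations_of_set V" using assms by (auto simp: permutations_of_set_def)
qed simp

lemma sum_permutations_last_rel_rank: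
  fixes f :: "nat list \<Rightarrow> real"
  assumes "s \<in> {1..Suc j}"
  shows "(\<Sum>\<rho>\<in>permutations_of_set {1..Suc j}. (if rel_ranks \<rho> ! j = s then f (take j (rel_ranks \<rho>)) else 0)) =
         (\<Sum>\<rho>\<in>permutations_of_set {1..j}. f (rel_ranks \<rho>))"
proof -
  let ?P = "permutations_of_set {1..Suc j}" and ?Q = "permutations_of_set ({1..Suc j} - {s})"
  have "(\<Sum>\<rho>\<in>?P. (if rel_ranks \<rho> ! j = s then f (take j (rel_ranks \<rho>)) else 0)) =
        (\<Sum>\<rho>\<in>?P. (if last \<rho> = s then f (rel_ranks (butlast \<rho>)) else 0))"
  proof (rule sum.cong[OF refl])
    fix \<rho> assume r: "\<rho> \<in> ?P"
    hence "length \<rho> = Suc j" by (simp add: length_perm_interval)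
    moreover from this have "last \<rho> = \<rho> ! j" by (cases \<rho> rule: rev_cases) auto
    ultimately show "(if rel_ranks \<rho> ! j = s then f (take j (rel_ranks \<rho>)) else 0) =
        (if last \<rho> = s then f (rel_ranks (butlast \<rho>)) else 0)"
      using rel_rank_last_permutation[OF r]
      by (simp add: take_rel_ranks butlast_conv_take)
  qed
  also have "\<dots> = (\<Sum>\<rho>\<in>{\<rho>\<in>?P. last \<rho> = s}. f (rel_ranks (butlast \<rho>)))"
    by (simp add: sum.inter_filter)
  also have "\<dots> = (\<Sum>ys\<in>?Q. f (rel_ranks ys))"
    unfolding permutations_with_last[OF assms] by (subst sum.reindex) (auto simp: inj_on_def)
  also have "\<dots> = (\<Sum>\<rho>\<in>permutations_of_set {1..j}. f (rel_ranks \<rho>))"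
    by (rule sum_permutations_rel_ranks) (use assms in auto)
  finally show ?thesis .
qed

text \<open>The last relative rank \<open>r\<^sub>t\<close> is uniform on \<open>{1..t}\<close> and independent of
  \<open>r\<^sub>1, \<dots>, r\<^sub>t\<^sub>-\<^sub>1\<close>.\<close>
lemma last_rel_rank_uniform:
  fixes f :: "nat list \<Rightarrow> real"
  assumes "j < n" "s \<in> {1..Suc j}"
  shows "(\<Sum>\<sigma>\<in>permutations_of_set {1..n}. (if relrank \<sigma> j = s then 1 else 0) * f (take j (rel_ranks \<sigma>))) =
         (\<Sum>\<sigma>\<in>permutations_of_set {1..n}. f (take j (rel_ranks \<sigma>))) / real (Suc j)"
proof -
  let ?S = "\<Sum>\<rho>\<in>permutations_of_set {1..j}. f (rel_ranks \<rho>)"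
  define G where "G r = (if r ! j = s then f (take j r) else 0)" for r
  have "(\<Sum>\<sigma>\<in>permutations_of_set {1..n}. (if relrank \<sigma> j = s then 1 else 0) * f (take j (rel_ranks \<sigma>))) =
        (\<Sum>\<sigma>\<in>permutations_of_set {1..n}. G (take (Suc j) (rel_ranks \<sigma>)))"
    using assms by (intro sum.cong refl) (auto simp: G_def length_perm_interval)
  also have "\<dots> = fact n / fact (Suc j) * (\<Sum>\<rho>\<in>permutations_of_set {1..Suc j}. G (rel_ranks \<rho>))"
    using assms by (intro sum_permutations_rel_ranks_prefix) auto
  also have "(\<Sum>\<rho>\<in>permutations_of_set {1..Suc j}. G (rel_ranks \<rho>)) = ?S"
    unfolding G_def by (rule sum_permutations_last_rel_rank[OF assms(2)])
  also have "fact n / fact (Suc j) * ?S = (fact n / fact j * ?S) / real (Suc j)"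
    by (simp add: field_simps)
  also have "fact n / fact j * ?S = (\<Sum>\<sigma>\<in>permutations_of_set {1..n}. f (take j (rel_ranks \<sigma>)))"
    using assms by (intro sum_permutations_rel_ranks_prefix[symmetric]) auto
  finally show ?thesis .
qed

section \<open>The conditional law of the overall rank\<close>

definition subsets_with_rank :: "nat \<Rightarrow> nat \<Rightarrow> nat \<Rightarrow> nat \<Rightarrow> nat set set" where
  "subsets_with_rank n m i s = {A. A \<subseteq> {1..n} \<and> card A = m \<and> i \<in> A \<and> card {y\<in>A. y \<le> i} = s}"

lemma subsets_with_rank_eq_image:
  assumes "i \<in> {1..n}" "1 \<le> s" "s \<le> m"
  shows "subsets_with_rank n m i s = (\<lambda>(B, C). B \<union> insert i C) `
    ({B. B \<subseteq> {1..<i} \<and> card B = s - 1} \<times> {C. C \<subseteq> {i<..n} \<and> card C = m - s})"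
proof (intro equalityI subsetI)
  fix A assume "A \<in> subsets_with_rank n m i s"
  hence A: "A \<subseteq> {1..n}" "card A = m" "i \<in> A" "card {y\<in>A. y \<le> i} = s"
    by (auto simp: subsets_with_rank_def)
  define B where "B = {y\<in>A. y < i}"
  define C where "C = {y\<in>A. i < y}"
  have "finite A" using A(1) finite_subset by blast
  hence fin: "finite A" "finite B" "finite C" by (auto simp: B_def C_def)
  have "{y\<in>A. y \<le> i} = insert i B" using A(3) by (auto simp: B_def)
  hence cB: "card B = s - 1" using A(4) fin by (simp add: B_def)
  have split: "A = B \<union> insert i C" using A(3) by (auto simp: B_def C_def)
  have "card A = card B + Suc (card C)"
    by (subst split, subst card_Un_disjoint) (use fin in \<open>auto simp: B_def C_def\<close>)
  hence "card C = m - s" using A(2) cB assms by linarith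
  hence "(B, C) \<in> {B. B \<subseteq> {1..<i} \<and> card B = s - 1} \<times> {C. C \<subseteq> {i<..n} \<and> card C = m - s}"
    using cB A(1) by (auto simp: B_def C_def)
  thus "A \<in> (\<lambda>(B, C). B \<union> insert i C) `
    ({B. B \<subseteq> {1..<i} \<and> card B = s - 1} \<times> {C. C \<subseteq> {i<..n} \<and> card C = m - s})"
    by (rule rev_image_eqI) (simp only: prod.case, rule split)
next
  fix X assume "X \<in> (\<lambda>(B, C). B \<union> insert i C) `
    ({B. B \<subseteq> {1..<i} \<and> card B = s - 1} \<times> {C. C \<subseteq> {i<..n} \<and> card C = m - s})"
  then obtain B C where B: "B \<subseteq> {1..<i}" "card B = s - 1" and C: "C \<subseteq> {i<..n}" "card C = m - s"
    and X: "X = B \<union> insert i C" by auto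
  have fin: "finite B" "finite C" using B C finite_subset by auto
  have lt: "\<forall>x\<in>B. x < i" "\<forall>x\<in>C. i < x" using B C by auto
  have "B \<inter> insert i C = {}" using lt by fastforce
  hence "card X = card B + card (insert i C)"
    unfolding X using fin by (intro card_Un_disjoint) auto
  also have "card (insert i C) = Suc (card C)" using fin lt by auto
  moreover have "{y\<in>X. y \<le> i} = insert i B" using X lt by auto
  moreover have "i \<notin> B" using lt by auto
  ultimately show "X \<in> subsets_with_rank n m i s"
    using B C X fin assms by (auto simp: subsets_with_rank_def)
qed

lemma card_subsets_with_rank:
  assumes "i \<in> {1..n}" "1 \<le> s" "s \<le> m"
  shows "card (subsets_with_rank n m i s) = ((i - 1) choose (s - 1)) * ((n - i) choose (m - s))"
proof -
  let ?f = "\<lambda>(B, C). B \<union> insert i C"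
  let ?BB = "{B. B \<subseteq> {1..<i} \<and> card B = s - 1}" and ?CC = "{C. C \<subseteq> {i<..n} \<and> card C = m - s}"
  have "inj_on ?f (?BB \<times> ?CC)"
  proof (rule inj_onI, clarify)
    fix B C B' C'
    assume sub: "B \<subseteq> {1..<i}" "C \<subseteq> {i<..n}" "B' \<subseteq> {1..<i}" "C' \<subseteq> {i<..n}"
      and eq: "B \<union> insert i C = B' \<union> insert i C'"
    from sub have "B = (B \<union> insert i C) \<inter> {..<i}" "B' = (B' \<union> insert i C') \<inter> {..<i}"
      and "C = (B \<union> insert i C) \<inter> {i<..}" "C' = (B' \<union> insert i C') \<inter> {i<..}" by auto
    thus "B = B' \<and> C = C'" unfolding eq by simp
  qed
  hence "card (subsets_with_rank n m i s) = card ?BB * card ?CC"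
    unfolding subsets_with_rank_eq_image[OF assms] by (simp add: card_image card_cartesian_product)
  thus ?thesis by (simp add: n_subsets)
qed

lemma card_subsets_with_rank_eq_0:
  assumes "i \<in> {1..k} - {s..min k (n - m + s)}" "m \<le> n" "s \<in> {1..m}"
  shows "card (subsets_with_rank n m i s) = 0"
proof (cases "i \<le> n")
  case True
  have "i < s \<or> n - m + s < i" using assms(1) by auto
  hence "(i - 1) choose (s - 1) = 0 \<or> (n - i) choose (m - s) = 0"
    using assms True by (auto simp: binomial_eq_0_iff)
  thus ?thesis using assms True by (subst card_subsets_with_rank) auto
qed (auto simp: subsets_with_rank_def)

text \<open>For \<open>A \<subseteq> {1..}\<close> this is \<open>1\<close> if the \<open>s\<close>-th smallest element of \<open>A\<close> is at most \<open>k\<close>,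
  and \<open>0\<close> otherwise.\<close>
definition order_stat_le :: "nat \<Rightarrow> nat \<Rightarrow> nat set \<Rightarrow> real" where
  "order_stat_le k s A = real (card {i\<in>{1..k}. i \<in> A \<and> card {y\<in>A. y \<le> i} = s})"

lemma order_stat_le_card_le:
  fixes A :: "nat set"
  assumes "finite A" "a \<in> A" "1 \<le> a"
  shows "order_stat_le k (card {y\<in>A. y \<le> a}) A = (if a \<le> k then 1 else 0)"
proof -
  have "inj_on (\<lambda>a. card {y\<in>A. y \<le> a}) A"
    by (rule strict_mono_on_imp_inj_on[OF strict_mono_on_card_le[OF assms(1)]])
  hence "{i\<in>{1..k}. i \<in> A \<and> card {y\<in>A. y \<le> i} = card {y\<in>A. y \<le> a}} = {i\<in>{1..k}. i = a}"
    using assms(2) by (auto dest: inj_onD)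
  also have "\<dots> = (if a \<le> k then {a} else {})" using assms(3) by auto
  finally show ?thesis by (simp add: order_stat_le_def)
qed

text \<open>Double counting the pairs \<open>(A, i)\<close> with \<open>i\<close> the \<open>s\<close>-th smallest element of \<open>A\<close>.\<close>
lemma sum_order_stat_le:
  assumes "m \<le> n" "s \<in> {1..m}"
  shows "(\<Sum>A\<in>{A. A \<subseteq> {1..n} \<and> card A = m}. order_stat_le k s A) = real (n choose m) * cond_prob n m s k"
proof -
  let ?S = "{A. A \<subseteq> {1..n} \<and> card A = m}"
  have "(\<Sum>A\<in>?S. order_stat_le k s A) =
      (\<Sum>A\<in>?S. \<Sum>i\<in>{1..k}. if i \<in> A \<and> card {y\<in>A. y \<le> i} = s then 1 else 0)"
    unfolding order_stat_le_def by (intro sum.cong refl) (simp add: sum.inter_filter[symmetric])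
  also have "\<dots> = (\<Sum>i\<in>{1..k}. real (card (subsets_with_rank n m i s)))"
    by (subst sum.swap) (auto simp: sum.inter_filter[symmetric] subsets_with_rank_def intro!: sum.cong arg_cong[where f=card])
  also have "\<dots> = (\<Sum>i=s..min k (n - m + s). real (card (subsets_with_rank n m i s)))"
    using card_subsets_with_rank_eq_0[OF _ assms] assms by (intro sum.mono_neutral_right) auto
  also have "\<dots> = (\<Sum>i=s..min k (n - m + s). real ((i - 1) choose (s - 1)) * real ((n - i) choose (m - s)))"
    using assms by (intro sum.cong refl) (auto simp: card_subsets_with_rank)
  also have "\<dots> = real (n choose m) * cond_prob n m s k"
    using assms by (simp add: cond_prob_def)
  finally show ?thesis .
qed

lemma sum_rel_rank_order_stat_le:
  assumes xs: "xs \<in> arrangements (Suc j) {1..n}"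
  shows "(\<Sum>s\<in>{1..Suc j}. (if rel_ranks xs ! j = s then g (rel_ranks xs) else 0) * order_stat_le k s (set xs)) =
         (if xs ! j \<le> k then 1 else 0) * g (rel_ranks xs)"
proof -
  have d: "distinct xs" and sub: "set xs \<subseteq> {1..n}" and l: "length xs = Suc j"
    using xs by (auto simp: arrangements_def)
  have rank: "rel_ranks xs ! j = card {y\<in>set xs. y \<le> xs ! j}"
    using relrank_last[OF d l[symmetric]] l by simp
  have "rel_ranks xs ! j \<in> {1..Suc j}" using relrank_bounds[of j xs] l by simp
  hence "(\<Sum>s\<in>{1..Suc j}. (if rel_ranks xs ! j = s then g (rel_ranks xs) else 0) * order_stat_le k s (set xs)) =
      (\<Sum>s\<in>{1..Suc j}. if s = rel_ranks xs ! j then g (rel_ranks xs) * order_stat_le k s (set xs) else 0)"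
    by (intro sum.cong) auto
  also have "\<dots> = g (rel_ranks xs) * order_stat_le k (rel_ranks xs ! j) (set xs)"
    using \<open>rel_ranks xs ! j \<in> {1..Suc j}\<close> by (simp only: sum.delta finite_atLeastAtMost if_True)
  also have "order_stat_le k (rel_ranks xs ! j) (set xs) = (if xs ! j \<le> k then 1 else 0)"
  proof -
    have "xs ! j \<in> {1..n}" using l sub by (metis lessI nth_mem subsetD)
    thus ?thesis unfolding rank by (intro order_stat_le_card_le) (use l in auto)
  qed
  finally show ?thesis by simp
qed

lemma sum_arrangements_rank_le:
  fixes g :: "nat list \<Rightarrow> real"
  assumes "j < n"
  shows "(\<Sum>xs\<in>arrangements (Suc j) {1..n}. (if xs ! j \<le> k then 1 else 0) * g (rel_ranks xs)) =
    (\<Sum>s=1..Suc j. real (n choose Suc j) * cond_prob n (Suc j) s k *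
       (\<Sum>\<rho>\<in>permutations_of_set {1..Suc j}. (if rel_ranks \<rho> ! j = s then g (rel_ranks \<rho>) else 0)))"
proof -
  let ?G = "\<lambda>s r. if r ! j = s then g r else 0" and ?X = "arrangements (Suc j) {1..n}"
  have "(\<Sum>xs\<in>?X. (if xs ! j \<le> k then 1 else 0) * g (rel_ranks xs)) =
      (\<Sum>xs\<in>?X. \<Sum>s=1..Suc j. ?G s (rel_ranks xs) * order_stat_le k s (set xs))"
    by (intro sum.cong refl) (simp only: sum_rel_rank_order_stat_le)
  also have "\<dots> = (\<Sum>s=1..Suc j. \<Sum>xs\<in>?X. ?G s (rel_ranks xs) * order_stat_le k s (set xs))"
    by (rule sum.swap)
  also have "\<dots> = (\<Sum>s=1..Suc j. (\<Sum>A\<in>{A. A \<subseteq> {1..n} \<and> card A = Suc j}. order_stat_le k s A) *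
      (\<Sum>\<rho>\<in>permutations_of_set {1..Suc j}. ?G s (rel_ranks \<rho>)))"
    by (intro sum.cong refl sum_arrangements_rel_ranks) simp
  also have "\<dots> = (\<Sum>s=1..Suc j. real (n choose Suc j) * cond_prob n (Suc j) s k *
      (\<Sum>\<rho>\<in>permutations_of_set {1..Suc j}. ?G s (rel_ranks \<rho>)))"
    using assms by (intro sum.cong refl) (subst sum_order_stat_le; auto)
  finally show ?thesis .
qed

text \<open>Given \<open>r\<^sub>1, \<dots>, r\<^sub>t\<close>, the overall rank \<open>R\<^sub>t\<close> depends only on \<open>r\<^sub>t\<close>, with the
  conditional law \<open>cond_prob\<close>.\<close>
lemma sum_permutations_rank_le:
  fixes g :: "nat list \<Rightarrow> real"
  assumes "j < n"
  shows "(\<Sum>\<sigma>\<in>permutations_of_set {1..n}. (if \<sigma> ! j \<le> k then 1 else 0) * g (take (Suc j) (rel_ranks \<sigma>))) =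
    (\<Sum>s=1..Suc j. (\<Sum>\<sigma>\<in>permutations_of_set {1..n}. (if relrank \<sigma> j = s then 1 else 0) *
       g (take (Suc j) (rel_ranks \<sigma>))) * cond_prob n (Suc j) s k)"
proof -
  let ?K = "\<lambda>s. \<Sum>\<rho>\<in>permutations_of_set {1..Suc j}. (if rel_ranks \<rho> ! j = s then g (rel_ranks \<rho>) else 0)"
  have len: "\<sigma> \<in> permutations_of_set {1..n} \<Longrightarrow> j < length \<sigma> \<and> Suc j \<le> length \<sigma>" for \<sigma>
    using assms by (simp add: length_perm_interval)
  have "(\<Sum>\<sigma>\<in>permutations_of_set {1..n}. (if \<sigma> ! j \<le> k then 1 else 0) * g (take (Suc j) (rel_ranks \<sigma>))) =
      (\<Sum>\<sigma>\<in>permutations_of_set {1..n}. (\<lambda>xs. (if xs ! j \<le> k then 1 else 0) * g (rel_ranks xs)) (take (Suc j) \<sigma>))"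
    using len by (intro sum.cong refl) (simp add: take_rel_ranks)
  also have "\<dots> = fact (n - Suc j) *
      (\<Sum>xs\<in>arrangements (Suc j) {1..n}. (if xs ! j \<le> k then 1 else 0) * g (rel_ranks xs))"
    using sum_permutations_prefix[of "{1..n}" "Suc j" "\<lambda>xs. (if xs ! j \<le> k then 1 else 0) * g (rel_ranks xs)"] assms
    by simp
  also have "\<dots> = (\<Sum>s=1..Suc j. fact (n - Suc j) * (real (n choose Suc j) * cond_prob n (Suc j) s k * ?K s))"
    unfolding sum_arrangements_rank_le[OF assms] by (subst sum_distrib_left) (rule refl)
  also have "\<dots> = (\<Sum>s=1..Suc j. fact n / fact (Suc j) * ?K s * cond_prob n (Suc j) s k)"
    using assms by (simp only: fact_diff_mult_choose[symmetric] Suc_leI mult_ac)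
  also have "\<dots> = (\<Sum>s=1..Suc j. (\<Sum>\<sigma>\<in>permutations_of_set {1..n}. (if relrank \<sigma> j = s then 1 else 0) *
       g (take (Suc j) (rel_ranks \<sigma>))) * cond_prob n (Suc j) s k)"
  proof (intro sum.cong refl arg_cong2[where f=times])
    fix s
    have "(\<Sum>\<sigma>\<in>permutations_of_set {1..n}. (if relrank \<sigma> j = s then 1 else 0) * g (take (Suc j) (rel_ranks \<sigma>))) =
        (\<Sum>\<sigma>\<in>permutations_of_set {1..n}. (\<lambda>r. if r ! j = s then g r else 0) (take (Suc j) (rel_ranks \<sigma>)))"
      using len by (intro sum.cong refl) simp
    also have "\<dots> = fact n / fact (Suc j) * ?K s"
      using assms by (intro sum_permutations_rel_ranks_prefix) simp
    finally show "fact n / fact (Suc j) * ?K s =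
        (\<Sum>\<sigma>\<in>permutations_of_set {1..n}. (if relrank \<sigma> j = s then 1 else 0) * g (take (Suc j) (rel_ranks \<sigma>)))" ..
  qed
  finally show ?thesis .
qed

section \<open>The decision process of a policy\<close>

text \<open>For the relative ranks \<open>rs\<close> of an arrival order and a history \<open>acts\<close> of rejected
  offers and passes, \<open>offer_prob p P rs acts j\<close> is the probability that the process is
  still running at the (0-based) arrival \<open>j\<close> and makes an offer there, and
  \<open>reach_prob p P rs acts j\<close> the probability that it is still running at arrival \<open>j\<close>.\<close>
function offer_prob :: "real \<Rightarrow> policy \<Rightarrow> nat list \<Rightarrow> bool list \<Rightarrow> nat \<Rightarrow> real" where
  "offer_prob p P rs acts j =
     (if length rs \<le> length acts then 0 else
       (let t = length acts; q = P (take (Suc t) rs) acts in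
        if j \<le> t then (if j = t then q else 0)
        else q * (1 - p) * offer_prob p P rs (acts @ [True]) j + (1 - q) * offer_prob p P rs (acts @ [False]) j))"
  by pat_completeness auto
termination
  by (relation "Wellfounded.measure (\<lambda>(p, P, rs, acts, j). length rs - length acts)") auto

function reach_prob :: "real \<Rightarrow> policy \<Rightarrow> nat list \<Rightarrow> bool list \<Rightarrow> nat \<Rightarrow> real" where
  "reach_prob p P rs acts j =
     (if j \<le> length acts then 1 else if length rs \<le> length acts then 0 else
       (let t = length acts; q = P (take (Suc t) rs) acts in
        q * (1 - p) * reach_prob p P rs (acts @ [True]) j + (1 - q) * reach_prob p P rs (acts @ [False]) j))"
  by pat_completeness auto
termination
  by (relation "Wellfounded.measure (\<lambda>(p, P, rs, acts, j). length rs - length acts)") auto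

declare offer_prob.simps[simp del] reach_prob.simps[simp del] win.simps[simp del]

lemma offer_prob_step:
  "length acts < length rs \<Longrightarrow> length acts < j \<Longrightarrow>
   offer_prob p P rs acts j = P (take (Suc (length acts)) rs) acts * (1 - p) * offer_prob p P rs (acts @ [True]) j
      + (1 - P (take (Suc (length acts)) rs) acts) * offer_prob p P rs (acts @ [False]) j"
  by (subst offer_prob.simps) (simp add: Let_def)

lemma offer_prob_base:
  "length acts < length rs \<Longrightarrow> offer_prob p P rs acts (length acts) = P (take (Suc (length acts)) rs) acts"
  by (subst offer_prob.simps) (simp add: Let_def)

lemma reach_prob_base: "j \<le> length acts \<Longrightarrow> reach_prob p P rs acts j = 1"
  by (subst reach_prob.simps) simp

lemma reach_prob_step:
  "length acts < length rs \<Longrightarrow> length acts < j \<Longrightarrow>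
   reach_prob p P rs acts j = P (take (Suc (length acts)) rs) acts * (1 - p) * reach_prob p P rs (acts @ [True]) j
      + (1 - P (take (Suc (length acts)) rs) acts) * reach_prob p P rs (acts @ [False]) j"
  by (subst reach_prob.simps) (simp add: Let_def)

lemma map_relrank_upt:
  "t < length \<sigma> \<Longrightarrow> map (relrank \<sigma>) [0..<Suc t] = take (Suc t) (rel_ranks \<sigma>)"
  by (simp add: rel_ranks_def take_map)

lemma win_eq_sum_offer_prob:
  "win p P \<sigma> k acts = (\<Sum>j\<in>{length acts..<length \<sigma>}. p * (if \<sigma> ! j \<le> k then 1 else 0) * offer_prob p P (rel_ranks \<sigma>) acts j)"
proof (induction "length \<sigma> - length acts" arbitrary: acts rule: less_induct)
  case less
  show ?case
  proof (cases "length \<sigma> \<le> length acts")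
    case True
    thus ?thesis by (subst win.simps) simp
  next
    case False
    let ?t = "length acts"
    let ?q = "P (take (Suc ?t) (rel_ranks \<sigma>)) acts"
    let ?c = "\<lambda>j. p * (if \<sigma> ! j \<le> k then 1 else 0)"
    have lt: "?t < length \<sigma>" using False by simp
    have IHT: "win p P \<sigma> k (acts @ [True]) = (\<Sum>j\<in>{Suc ?t..<length \<sigma>}. ?c j * offer_prob p P (rel_ranks \<sigma>) (acts @ [True]) j)"
      using less[of "acts @ [True]"] lt by simp
    have IHF: "win p P \<sigma> k (acts @ [False]) = (\<Sum>j\<in>{Suc ?t..<length \<sigma>}. ?c j * offer_prob p P (rel_ranks \<sigma>) (acts @ [False]) j)"
      using less[of "acts @ [False]"] lt by simp
    have "win p P \<sigma> k acts = ?q * (p * (if \<sigma> ! ?t \<le> k then 1 else 0) + (1 - p) * win p P \<sigma> k (acts @ [True]))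
            + (1 - ?q) * win p P \<sigma> k (acts @ [False])"
    proof -
      have mp: "map (relrank \<sigma>) [0..<Suc ?t] = take (Suc ?t) (rel_ranks \<sigma>)" by (rule map_relrank_upt[OF lt])
      show ?thesis using lt by (subst win.simps) (simp only: Let_def mp, simp)
    qed
    also have "\<dots> = ?c ?t * ?q + (\<Sum>j\<in>{Suc ?t..<length \<sigma>}. ?c j * (?q * (1 - p) * offer_prob p P (rel_ranks \<sigma>) (acts @ [True]) j
            + (1 - ?q) * offer_prob p P (rel_ranks \<sigma>) (acts @ [False]) j))"
      unfolding IHT IHF by (simp add: sum.distrib sum_subtractf sum_distrib_left algebra_simps)
    also have "\<dots> = ?c ?t * offer_prob p P (rel_ranks \<sigma>) acts ?t + (\<Sum>j\<in>{Suc ?t..<length \<sigma>}. ?c j * offer_prob p P (rel_ranks \<sigma>) acts j)"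
    proof -
      have "offer_prob p P (rel_ranks \<sigma>) acts ?t = ?q" using lt by (simp add: offer_prob_base)
      moreover have "(\<Sum>j\<in>{Suc ?t..<length \<sigma>}. ?c j * (?q * (1 - p) * offer_prob p P (rel_ranks \<sigma>) (acts @ [True]) j
            + (1 - ?q) * offer_prob p P (rel_ranks \<sigma>) (acts @ [False]) j)) = (\<Sum>j\<in>{Suc ?t..<length \<sigma>}. ?c j * offer_prob p P (rel_ranks \<sigma>) acts j)"
        by (rule sum.cong[OF refl]) (use lt in \<open>simp add: offer_prob_step\<close>)
      ultimately show ?thesis by simp
    qed
    also have "\<dots> = (\<Sum>j\<in>{?t..<length \<sigma>}. ?c j * offer_prob p P (rel_ranks \<sigma>) acts j)"
      using lt by (simp add: sum.atLeast_Suc_lessThan)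
    finally show ?thesis by simp
  qed
qed

lemma history_induct [consumes 1, case_names base step]:
  assumes "length acts \<le> j"
    and base: "\<And>acts. length acts = j \<Longrightarrow> Q acts"
    and step: "\<And>acts. length acts < j \<Longrightarrow> (\<And>b. Q (acts @ [b])) \<Longrightarrow> Q acts"
  shows "Q acts"
  using assms(1)
proof (induction "j - length acts" arbitrary: acts rule: less_induct)
  case less
  show ?case
  proof (cases "length acts = j")
    case False
    hence lt: "length acts < j" using less.prems by simp
    show ?thesis
    proof (rule step[OF lt])
      fix b show "Q (acts @ [b])" using less.hyps[of "acts @ [b]"] lt by simp
    qed
  qed (rule base)
qed

lemma reach_prob_Suc:
  assumes "length acts \<le> j" "j < length rs"
  shows "reach_prob p P rs acts (Suc j) = reach_prob p P rs acts j - p * offer_prob p P rs acts j"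
  using assms(1)
proof (induction acts rule: history_induct)
  case (base acts)
  thus ?case using assms(2)
    by (simp add: reach_prob_step reach_prob_base offer_prob_base[of acts rs p P, simplified base] algebra_simps)
next
  case (step acts)
  thus ?case using assms(2) step.hyps
    by (simp add: step.IH reach_prob_step[of acts rs] offer_prob_step[of acts rs] algebra_simps)
qed

lemma offer_prob_bounds:
  assumes P: "\<And>rs acts. 0 \<le> P rs acts \<and> P rs acts \<le> 1" and p: "0 \<le> p" "p \<le> 1"
    and "length acts \<le> j" "j < length rs"
  shows "0 \<le> offer_prob p P rs acts j \<and> offer_prob p P rs acts j \<le> reach_prob p P rs acts j"
  using assms(4)
proof (induction acts rule: history_induct)
  case (base acts)
  thus ?case using P assms(5) offer_prob_base[of acts rs p P] by (simp add: reach_prob_base)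
next
  case (step acts)
  let ?q = "P (take (Suc (length acts)) rs) acts"
  have w: "0 \<le> ?q * (1 - p)" "0 \<le> 1 - ?q" using P p by auto
  have "0 \<le> ?q * (1 - p) * offer_prob p P rs (acts @ [True]) j + (1 - ?q) * offer_prob p P rs (acts @ [False]) j"
    using w step.IH by (intro add_nonneg_nonneg mult_nonneg_nonneg) (use P p in auto)
  moreover have "?q * (1 - p) * offer_prob p P rs (acts @ [True]) j + (1 - ?q) * offer_prob p P rs (acts @ [False]) j
     \<le> ?q * (1 - p) * reach_prob p P rs (acts @ [True]) j + (1 - ?q) * reach_prob p P rs (acts @ [False]) j"
    using w step.IH by (intro add_mono mult_left_mono) (use P p in auto)
  ultimately show ?case using step.hyps assms(5) by (simp add: offer_prob_step[of acts rs] reach_prob_step[of acts rs])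
qed

lemma offer_prob_take:
  assumes "length acts \<le> j" "j < length rs"
  shows "offer_prob p P rs acts j = offer_prob p P (take (Suc j) rs) acts j"
  using assms(1)
proof (induction acts rule: history_induct)
  case (base acts)
  thus ?case using assms(2) offer_prob_base[of acts rs p P] offer_prob_base[of acts "take (Suc j) rs" p P]
    by (simp add: min_def)
next
  case (step acts)
  have "take (Suc (length acts)) (take (Suc j) rs) = take (Suc (length acts)) rs"
    using step.hyps by (simp add: min_def)
  thus ?case using step assms(2)
    by (simp add: offer_prob_step[of acts "take (Suc j) rs"] offer_prob_step[of acts rs])
qed

lemma reach_prob_take:
  assumes "length acts \<le> j" "j \<le> length rs"
  shows "reach_prob p P rs acts j = reach_prob p P (take j rs) acts j"
  using assms(1)
proof (induction acts rule: history_induct)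
  case (base acts)
  thus ?case by (simp add: reach_prob_base)
next
  case (step acts)
  have "take (Suc (length acts)) (take j rs) = take (Suc (length acts)) rs"
    using step.hyps by (simp add: min_def)
  thus ?case using step assms(2)
    by (simp add: reach_prob_step[of acts "take j rs"] reach_prob_step[of acts rs])
qed

lemma offer_prob_factor:
  assumes Q: "\<And>t acts. t < length rs \<Longrightarrow> P (take (Suc t) rs) acts = Q t (rs ! t)"
    and "length acts \<le> j" "j < length rs"
  shows "offer_prob p P rs acts j = reach_prob p P rs acts j * Q j (rs ! j)"
  using assms(2)
proof (induction acts rule: history_induct)
  case (base acts)
  thus ?case using Q assms(3) offer_prob_base[of acts rs p P] by (simp add: reach_prob_base)
next
  case (step acts)
  thus ?case using assms(3)
    by (simp add: offer_prob_step[of acts rs] reach_prob_step[of acts rs] algebra_simps)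
qed

section \<open>Offer frequencies of a policy\<close>

text \<open>\<open>offer_freq n p P j s\<close> is the LP variable \<open>x\<^sub>t\<^sub>,\<^sub>s\<close> for \<open>t = j + 1\<close>: the probability that \<open>P\<close>
  makes an offer to candidate \<open>t\<close> while \<open>r\<^sub>t = s\<close>.\<close>
definition offer_freq :: "nat \<Rightarrow> real \<Rightarrow> policy \<Rightarrow> nat \<Rightarrow> nat \<Rightarrow> real" where
  "offer_freq n p P j s = (\<Sum>\<sigma>\<in>permutations_of_set {1..n}. (if relrank \<sigma> j = s then 1 else 0) * offer_prob p P (rel_ranks \<sigma>) [] j) / fact n"

definition survival :: "nat \<Rightarrow> real \<Rightarrow> policy \<Rightarrow> nat \<Rightarrow> real" where
  "survival n p P j = (\<Sum>\<sigma>\<in>permutations_of_set {1..n}. reach_prob p P (rel_ranks \<sigma>) [] j) / fact n"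

lemma sum_offer_freq:
  assumes "j < n"
  shows "(\<Sum>s=1..Suc j. offer_freq n p P j s) =
    (\<Sum>\<sigma>\<in>permutations_of_set {1..n}. offer_prob p P (rel_ranks \<sigma>) [] j) / fact n"
proof -
  have "(\<Sum>s=1..Suc j. (if relrank \<sigma> j = s then 1 else 0::real)) = 1"
    if "\<sigma> \<in> permutations_of_set {1..n}" for \<sigma>
    using relrank_bounds[of j \<sigma>] assms length_perm_interval[OF that] by simp
  thus ?thesis
    unfolding offer_freq_def sum_divide_distrib[symmetric]
    by (subst sum.swap) (simp add: sum_distrib_right[symmetric])
qed

lemma sum_offer_prob_rank_le:
  assumes "j < n"
  shows "(\<Sum>\<sigma>\<in>permutations_of_set {1..n}. (if \<sigma> ! j \<le> k then 1 else 0) * offer_prob p P (rel_ranks \<sigma>) [] j) =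
    fact n * (\<Sum>s=1..Suc j. offer_freq n p P j s * cond_prob n (Suc j) s k)"
proof -
  let ?Pm = "permutations_of_set {1..n}"
  have local: "offer_prob p P (take (Suc j) (rel_ranks \<sigma>)) [] j = offer_prob p P (rel_ranks \<sigma>) [] j"
    if "\<sigma> \<in> ?Pm" for \<sigma>
    using assms length_perm_interval[OF that] by (simp add: offer_prob_take[symmetric])
  have "(\<Sum>\<sigma>\<in>?Pm. (if \<sigma> ! j \<le> k then 1 else 0) * offer_prob p P (rel_ranks \<sigma>) [] j) =
      (\<Sum>\<sigma>\<in>?Pm. (if \<sigma> ! j \<le> k then 1 else 0) * offer_prob p P (take (Suc j) (rel_ranks \<sigma>)) [] j)"
    by (intro sum.cong refl) (simp add: local)
  also have "\<dots> = (\<Sum>s=1..Suc j. (\<Sum>\<sigma>\<in>?Pm. (if relrank \<sigma> j = s then 1 else 0) *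
      offer_prob p P (take (Suc j) (rel_ranks \<sigma>)) [] j) * cond_prob n (Suc j) s k)"
    using assms by (rule sum_permutations_rank_le[where g="\<lambda>r. offer_prob p P r [] j"])
  also have "\<dots> = (\<Sum>s=1..Suc j. fact n * offer_freq n p P j s * cond_prob n (Suc j) s k)"
    unfolding offer_freq_def by (intro sum.cong refl arg_cong2[where f=times]) (simp_all add: local)
  finally show ?thesis by (simp only: sum_distrib_left mult.assoc)
qed

lemma collect_prob_eq_offer_freq:
  "collect_prob n p P k = p * (\<Sum>j<n. \<Sum>s=1..Suc j. offer_freq n p P j s * cond_prob n (Suc j) s k)"
proof -
  let ?Pm = "permutations_of_set {1..n}"
  have "(\<Sum>\<sigma>\<in>?Pm. win p P \<sigma> k []) =
      (\<Sum>\<sigma>\<in>?Pm. \<Sum>j<n. p * ((if \<sigma> ! j \<le> k then 1 else 0) * offer_prob p P (rel_ranks \<sigma>) [] j))"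
    by (rule sum.cong[OF refl]) (simp add: win_eq_sum_offer_prob length_perm_interval atLeast0LessThan mult.assoc)
  also have "\<dots> = (\<Sum>j<n. p * (\<Sum>\<sigma>\<in>?Pm. (if \<sigma> ! j \<le> k then 1 else 0) * offer_prob p P (rel_ranks \<sigma>) [] j))"
    by (subst sum.swap) (simp add: sum_distrib_left)
  also have "\<dots> = (\<Sum>j<n. p * (fact n * (\<Sum>s=1..Suc j. offer_freq n p P j s * cond_prob n (Suc j) s k)))"
    by (intro sum.cong refl) (simp only: sum_offer_prob_rank_le lessThan_iff)
  also have "\<dots> = fact n * (p * (\<Sum>j<n. \<Sum>s=1..Suc j. offer_freq n p P j s * cond_prob n (Suc j) s k))"
    by (simp add: sum_distrib_left mult_ac)
  finally show ?thesis unfolding collect_prob_def by simp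
qed

lemma survival_Suc:
  assumes "j < n"
  shows "survival n p P (Suc j) = survival n p P j - p * (\<Sum>s=1..Suc j. offer_freq n p P j s)"
proof -
  have "(\<Sum>\<sigma>\<in>permutations_of_set {1..n}. reach_prob p P (rel_ranks \<sigma>) [] (Suc j)) =
        (\<Sum>\<sigma>\<in>permutations_of_set {1..n}. reach_prob p P (rel_ranks \<sigma>) [] j - p * offer_prob p P (rel_ranks \<sigma>) [] j)"
    by (rule sum.cong[OF refl]) (use assms in \<open>simp add: reach_prob_Suc length_perm_interval\<close>)
  thus ?thesis unfolding survival_def sum_offer_freq[OF assms]
    by (simp add: sum_subtractf sum_distrib_left diff_divide_distrib)
qed

lemma survival_eq:
  "j \<le> n \<Longrightarrow> survival n p P j = 1 - p * (\<Sum>i<j. \<Sum>s=1..Suc i. offer_freq n p P i s)"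
proof (induction j)
  case 0
  thus ?case by (simp add: survival_def reach_prob_base)
next
  case (Suc j)
  thus ?case by (simp add: survival_Suc algebra_simps)
qed

lemma reach_given_last_rel_rank:
  assumes "j < n" "s \<in> {1..Suc j}"
  shows "(\<Sum>\<sigma>\<in>permutations_of_set {1..n}. (if relrank \<sigma> j = s then 1 else 0) * reach_prob p P (rel_ranks \<sigma>) [] j) / fact n
         = survival n p P j / real (Suc j)"
proof -
  have "(\<Sum>\<sigma>\<in>permutations_of_set {1..n}. (if relrank \<sigma> j = s then 1 else 0) * reach_prob p P (rel_ranks \<sigma>) [] j) =
        (\<Sum>\<sigma>\<in>permutations_of_set {1..n}. (if relrank \<sigma> j = s then 1 else 0) * (\<lambda>r. reach_prob p P r [] j) (take j (rel_ranks \<sigma>)))"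
    by (rule sum.cong[OF refl]) (use assms in \<open>simp add: reach_prob_take[symmetric] length_perm_interval\<close>)
  also have "\<dots> = (\<Sum>\<sigma>\<in>permutations_of_set {1..n}. (\<lambda>r. reach_prob p P r [] j) (take j (rel_ranks \<sigma>))) / real (Suc j)"
    by (rule last_rel_rank_uniform[OF assms])
  also have "(\<Sum>\<sigma>\<in>permutations_of_set {1..n}. (\<lambda>r. reach_prob p P r [] j) (take j (rel_ranks \<sigma>))) =
             (\<Sum>\<sigma>\<in>permutations_of_set {1..n}. reach_prob p P (rel_ranks \<sigma>) [] j)"
    by (rule sum.cong[OF refl]) (use assms in \<open>simp add: reach_prob_take[symmetric] length_perm_interval\<close>)
  finally show ?thesis unfolding survival_def by simp
qed

lemma offer_freq_bounds:
  assumes P: "P \<in> policies" and p: "0 \<le> p" "p \<le> 1" and j: "j < n" "s \<in> {1..Suc j}"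
  shows "0 \<le> offer_freq n p P j s" "offer_freq n p P j s \<le> survival n p P j / real (Suc j)"
proof -
  have Pb: "\<And>rs acts. 0 \<le> P rs acts \<and> P rs acts \<le> 1" using P by (simp add: policies_def)
  have b: "\<And>\<sigma>. \<sigma> \<in> permutations_of_set {1..n} \<Longrightarrow>
      0 \<le> offer_prob p P (rel_ranks \<sigma>) [] j \<and> offer_prob p P (rel_ranks \<sigma>) [] j \<le> reach_prob p P (rel_ranks \<sigma>) [] j"
    using offer_prob_bounds[OF Pb p] j by (simp add: length_perm_interval)
  show "0 \<le> offer_freq n p P j s" unfolding offer_freq_def
    using b by (intro divide_nonneg_pos sum_nonneg) auto
  have "offer_freq n p P j s \<le> (\<Sum>\<sigma>\<in>permutations_of_set {1..n}. (if relrank \<sigma> j = s then 1 else 0) * reach_prob p P (rel_ranks \<sigma>) [] j) / fact n"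
    unfolding offer_freq_def using b by (intro divide_right_mono sum_mono mult_left_mono) auto
  thus "offer_freq n p P j s \<le> survival n p P j / real (Suc j)" using reach_given_last_rel_rank[OF j] by simp
qed

section \<open>The linear program\<close>

definition prefix_mass :: "(nat \<Rightarrow> nat \<Rightarrow> real) \<Rightarrow> nat \<Rightarrow> real" where
  "prefix_mass x t = (\<Sum>\<tau>=1..t-1. \<Sum>\<sigma>=1..\<tau>. x \<tau> \<sigma>)"

lemma prefix_mass_Suc: "prefix_mass x (Suc j) = (\<Sum>i<j. \<Sum>s=1..Suc i. x (Suc i) s)"
  unfolding prefix_mass_def by (simp add: sum.atLeast1_atMost_eq)

lemma lp_objective_shift: "(\<Sum>t=1..n. \<Sum>s=1..t. x t s * cond_prob n t s k) =
   (\<Sum>j<n. \<Sum>s=1..Suc j. x (Suc j) s * cond_prob n (Suc j) s k)"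
  by (simp add: sum.atLeast1_atMost_eq)

lemma lp_feasibleD:
  assumes "lp_feasible n p x \<gamma>"
  shows "\<And>t s. t \<in> {1..n} \<Longrightarrow> s \<in> {1..t} \<Longrightarrow> 0 \<le> x t s"
    and "\<And>t s. t \<in> {1..n} \<Longrightarrow> s \<in> {1..t} \<Longrightarrow> x t s \<le> (1 / real t) * (1 - p * prefix_mass x t)"
    and "\<And>k. k \<in> {1..n} \<Longrightarrow> \<gamma> \<le> p / (1 - (1 - p) ^ k) * (\<Sum>t=1..n. \<Sum>s=1..t. x t s * cond_prob n t s k)"
  using assms unfolding lp_feasible_def prefix_mass_def by auto

lemma lp_feasible_le_1:
  assumes f: "lp_feasible n p x \<gamma>" and p: "0 \<le> p" and t: "t \<in> {1..n}" and s: "s \<in> {1..t}"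
  shows "x t s \<le> 1"
proof -
  have "0 \<le> prefix_mass x t"
    unfolding prefix_mass_def using lp_feasibleD(1)[OF f] t by (intro sum_nonneg) auto
  hence "0 \<le> p * prefix_mass x t" using p by simp
  hence "(1 / real t) * (1 - p * prefix_mass x t) \<le> 1"
    using p t by (simp add: field_simps)
  thus ?thesis using lp_feasibleD(2)[OF f t s] by linarith
qed

text \<open>Constraint \<open>k = 1\<close> has coefficient \<open>p / (1 - (1 - p)) = 1\<close>.\<close>
lemma lp_feasible_bounded:
  assumes f: "lp_feasible n p x \<gamma>" and "1 \<le> n" "0 < p" "p \<le> 1"
  shows "\<gamma> \<le> (\<Sum>t=1..n. \<Sum>s=1..t. \<bar>cond_prob n t s 1\<bar>)"
proof -
  have "\<gamma> \<le> (\<Sum>t=1..n. \<Sum>s=1..t. x t s * cond_prob n t s 1)"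
    using lp_feasibleD(3)[OF f, of 1] assms by simp
  also have "\<dots> \<le> (\<Sum>t=1..n. \<Sum>s=1..t. \<bar>cond_prob n t s 1\<bar>)"
  proof (intro sum_mono)
    fix t s assume t: "t \<in> {1..n}" and s: "s \<in> {1..t}"
    have "x t s * cond_prob n t s 1 \<le> \<bar>x t s\<bar> * \<bar>cond_prob n t s 1\<bar>"
      by (metis abs_ge_self abs_mult)
    also have "\<dots> \<le> 1 * \<bar>cond_prob n t s 1\<bar>"
      using lp_feasibleD(1)[OF f t s] lp_feasible_le_1[OF f _ t s] assms
      by (intro mult_right_mono) auto
    finally show "x t s * cond_prob n t s 1 \<le> \<bar>cond_prob n t s 1\<bar>" by simp
  qed
  finally show ?thesis .
qed

lemma bdd_above_lp_values:
  assumes "1 \<le> n" "0 < p" "p \<le> 1"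
  shows "bdd_above {\<gamma>. \<exists>x. lp_feasible n p x \<gamma>}"
  using lp_feasible_bounded[OF _ assms] by (auto intro!: bdd_aboveI)

lemma lp_feasible_zero: "lp_feasible n p (\<lambda>_ _. 0) 0"
  unfolding lp_feasible_def by simp

lemma lp_value_eq_optimal: "lp_optimal n p x \<gamma> \<Longrightarrow> lp_value n p = \<gamma>"
  unfolding lp_value_def lp_optimal_def by (rule cSup_eq_maximum) auto

lemma robust_ratio_le:
  assumes "k \<in> {1..n}"
  shows "robust_ratio n p P \<le> collect_prob n p P k / (1 - (1 - p) ^ k)"
  unfolding robust_ratio_def using assms by (intro Min_le) auto

lemma robust_ratio_ge:
  assumes "1 \<le> n" "\<And>k. k \<in> {1..n} \<Longrightarrow> \<gamma> \<le> collect_prob n p P k / (1 - (1 - p) ^ k)"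
  shows "\<gamma> \<le> robust_ratio n p P"
  unfolding robust_ratio_def using assms by (subst Min_ge_iff) auto

lemma offer_freq_lp_feasible:
  assumes P: "P \<in> policies" and p: "0 < p" "p \<le> 1"
  shows "lp_feasible n p (\<lambda>t s. offer_freq n p P (t - 1) s) (robust_ratio n p P)"
proof -
  let ?x = "\<lambda>t s. offer_freq n p P (t - 1) s"
  have "?x t s \<le> (1 / real t) * (1 - p * prefix_mass ?x t)" if t: "t \<in> {1..n}" and s: "s \<in> {1..t}" for t s
  proof -
    have "?x t s \<le> survival n p P (t - 1) / real (Suc (t - 1))"
      using offer_freq_bounds(2)[OF P _ p(2), of "t - 1" n s] p t s by auto
    also have "survival n p P (t - 1) = 1 - p * prefix_mass ?x t"
      using t by (subst survival_eq) (auto simp: prefix_mass_def sum.atLeast1_atMost_eq)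
    finally show ?thesis using t by simp
  qed
  moreover have "robust_ratio n p P \<le> p / (1 - (1 - p) ^ k) * (\<Sum>t=1..n. \<Sum>s=1..t. ?x t s * cond_prob n t s k)"
    if k: "k \<in> {1..n}" for k
  proof -
    have "collect_prob n p P k = p * (\<Sum>t=1..n. \<Sum>s=1..t. ?x t s * cond_prob n t s k)"
      unfolding collect_prob_eq_offer_freq lp_objective_shift by simp
    thus ?thesis using robust_ratio_le[OF k, of p P] by simp
  qed
  ultimately show ?thesis
    using offer_freq_bounds(1)[OF P _ p(2)] p unfolding lp_feasible_def prefix_mass_def
    by (auto simp del: of_nat_Suc)
qed

lemma robust_ratio_le_lp_value:
  assumes "P \<in> policies" "1 \<le> n" "0 < p" "p \<le> 1"
  shows "robust_ratio n p P \<le> lp_value n p"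
  unfolding lp_value_def
  using offer_freq_lp_feasible[OF assms(1,3,4)] bdd_above_lp_values[OF assms(2-4)]
  by (intro cSup_upper) blast+

text \<open>Reaching candidate \<open>t\<close> depends only on \<open>r\<^sub>1, \<dots>, r\<^sub>t\<^sub>-\<^sub>1\<close>, hence is independent of
  \<open>r\<^sub>t\<close>; so a policy acting on the state \<open>(t, r\<^sub>t)\<close> alone has factorized offer frequencies.\<close>
lemma offer_freq_markov:
  assumes Q: "\<And>\<sigma> t acts. \<sigma> \<in> permutations_of_set {1..n} \<Longrightarrow> t < n \<Longrightarrow>
       P (take (Suc t) (rel_ranks \<sigma>)) acts = Q t (relrank \<sigma> t)"
    and j: "j < n" "s \<in> {1..Suc j}"
  shows "offer_freq n p P j s = Q j s * survival n p P j / real (Suc j)"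
proof -
  have "offer_freq n p P j s = Q j s *
      ((\<Sum>\<sigma>\<in>permutations_of_set {1..n}. (if relrank \<sigma> j = s then 1 else 0) * reach_prob p P (rel_ranks \<sigma>) [] j) / fact n)"
    unfolding offer_freq_def sum_distrib_left times_divide_eq_right
  proof (intro arg_cong[where f="\<lambda>z. z / fact n"] sum.cong refl)
    fix \<sigma> assume \<sigma>: "\<sigma> \<in> permutations_of_set {1..n}"
    have "offer_prob p P (rel_ranks \<sigma>) [] j = reach_prob p P (rel_ranks \<sigma>) [] j * Q j (rel_ranks \<sigma> ! j)"
      using Q[OF \<sigma>] j length_perm_interval[OF \<sigma>] by (intro offer_prob_factor) auto
    thus "(if relrank \<sigma> j = s then 1 else 0) * offer_prob p P (rel_ranks \<sigma>) [] j =
          Q j s * ((if relrank \<sigma> j = s then 1 else 0) * reach_prob p P (rel_ranks \<sigma>) [] j)"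
      using j length_perm_interval[OF \<sigma>] by auto
  qed
  also have "\<dots> = Q j s * (survival n p P j / real (Suc j))"
    by (simp only: reach_given_last_rel_rank[OF j])
  finally show ?thesis by simp
qed

lemma lp_rule_offer_freq:
  assumes feas: "lp_feasible n p x \<gamma>"
    and rule: "\<And>\<sigma> t acts. \<sigma> \<in> permutations_of_set {1..n} \<Longrightarrow> t < n \<Longrightarrow>
       P (take (Suc t) (rel_ranks \<sigma>)) acts = real (Suc t) * x (Suc t) (relrank \<sigma> t) / (1 - p * prefix_mass x (Suc t))"
    and j: "j < n" "s \<in> {1..Suc j}"
  shows "offer_freq n p P j s = x (Suc j) s"
  using j
proof (induction j arbitrary: s rule: less_induct)
  case (less j)
  define D where "D = 1 - p * prefix_mass x (Suc j)"
  have "survival n p P j = 1 - p * (\<Sum>i<j. \<Sum>s=1..Suc i. offer_freq n p P i s)"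
    using less.prems by (intro survival_eq) simp
  also have "(\<Sum>i<j. \<Sum>s=1..Suc i. offer_freq n p P i s) = prefix_mass x (Suc j)"
    unfolding prefix_mass_Suc using less.IH less.prems by (intro sum.cong refl) auto
  finally have survival: "survival n p P j = D" unfolding D_def .
  have "offer_freq n p P j s = real (Suc j) * x (Suc j) s / D * survival n p P j / real (Suc j)"
    unfolding D_def using rule less.prems
    by (intro offer_freq_markov[where Q="\<lambda>t s. real (Suc t) * x (Suc t) s / (1 - p * prefix_mass x (Suc t))"])
       auto
  also have "\<dots> = real (Suc j) * x (Suc j) s / D * D / real (Suc j)" unfolding survival ..
  also have "\<dots> = x (Suc j) s"
  proof (cases "D = 0")
    case True
    have "x (Suc j) s \<le> (1 / real (Suc j)) * D" "0 \<le> x (Suc j) s"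
      using lp_feasibleD(1,2)[OF feas, of "Suc j" s] less.prems by (auto simp: D_def)
    thus ?thesis using True by simp
  qed simp
  finally show ?case .
qed

lemma lp_rule_robust:
  assumes feas: "lp_feasible n p x \<gamma>" and n: "1 \<le> n"
    and rule: "\<And>\<sigma> t acts. \<sigma> \<in> permutations_of_set {1..n} \<Longrightarrow> t < n \<Longrightarrow>
       P (take (Suc t) (rel_ranks \<sigma>)) acts = real (Suc t) * x (Suc t) (relrank \<sigma> t) / (1 - p * prefix_mass x (Suc t))"
  shows "\<gamma> \<le> robust_ratio n p P"
proof (rule robust_ratio_ge[OF n])
  fix k assume k: "k \<in> {1..n}"
  have "collect_prob n p P k = p * (\<Sum>t=1..n. \<Sum>s=1..t. x t s * cond_prob n t s k)"
    unfolding collect_prob_eq_offer_freq lp_objective_shift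
    using lp_rule_offer_freq[OF feas rule] by (intro arg_cong[where f="\<lambda>z. p * z"] sum.cong refl) auto
  thus "\<gamma> \<le> collect_prob n p P k / (1 - (1 - p) ^ k)"
    using lp_feasibleD(3)[OF feas k] by simp
qed

lemma last_take_rel_ranks:
  assumes "t < length \<sigma>"
  shows "last (take (Suc t) (rel_ranks \<sigma>)) = relrank \<sigma> t"
  using assms by (simp add: take_Suc_conv_app_nth)

lemma lp_policy_take_rel_ranks:
  assumes "\<sigma> \<in> permutations_of_set {1..n}" "t < n"
  shows "lp_policy p x (take (Suc t) (rel_ranks \<sigma>)) acts =
    real (Suc t) * x (Suc t) (relrank \<sigma> t) / (1 - p * prefix_mass x (Suc t))"
  using assms length_perm_interval[OF assms(1)]
  by (simp add: lp_policy_def Let_def prefix_mass_def last_take_rel_ranks)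

lemma ratio_le_1_bounds:
  fixes t y D :: real
  assumes "0 < t" "0 \<le> y" "y \<le> (1 / t) * D"
  shows "0 \<le> t * y / D \<and> t * y / D \<le> 1"
proof (cases "0 < D")
  case True
  have "t * y \<le> D" using assms by (simp add: field_simps)
  thus ?thesis using True assms by (simp add: divide_le_eq_1)
next
  case False
  hence "y = 0" using assms by (smt (verit) divide_nonneg_pos mult_nonneg_nonpos)
  thus ?thesis by simp
qed

text \<open>The rule of \<open>lp_policy\<close> is a probability only on genuine states \<open>(t, s)\<close> with
  \<open>s \<le> t \<le> n\<close>; elsewhere it is replaced by \<open>0\<close>, which no realized history ever sees.\<close>
definition lp_policy_clipped :: "nat \<Rightarrow> real \<Rightarrow> (nat \<Rightarrow> nat \<Rightarrow> real) \<Rightarrow> policy" where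
  "lp_policy_clipped n p x rs acts =
     (if length rs \<in> {1..n} \<and> last rs \<in> {1..length rs} then lp_policy p x rs acts else 0)"

lemma lp_policy_clipped_in_policies:
  assumes f: "lp_feasible n p x \<gamma>"
  shows "lp_policy_clipped n p x \<in> policies"
  unfolding policies_def
proof (intro CollectI allI)
  fix rs :: "nat list" and acts :: "bool list"
  let ?t = "length rs" and ?s = "last rs"
  show "0 \<le> lp_policy_clipped n p x rs acts \<and> lp_policy_clipped n p x rs acts \<le> 1"
  proof (cases "?t \<in> {1..n} \<and> ?s \<in> {1..?t}")
    case True
    hence t: "?t \<in> {1..n}" and s: "?s \<in> {1..?t}" by auto
    have "0 \<le> real ?t * x ?t ?s / (1 - p * prefix_mass x ?t) \<and>
        real ?t * x ?t ?s / (1 - p * prefix_mass x ?t) \<le> 1"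
      using lp_feasibleD(1,2)[OF f t s] t by (intro ratio_le_1_bounds) auto
    thus ?thesis using True
      by (simp add: lp_policy_clipped_def lp_policy_def Let_def prefix_mass_def)
  qed (auto simp: lp_policy_clipped_def)
qed

lemma lp_policy_clipped_take_rel_ranks:
  assumes "\<sigma> \<in> permutations_of_set {1..n}" "t < n"
  shows "lp_policy_clipped n p x (take (Suc t) (rel_ranks \<sigma>)) acts =
    real (Suc t) * x (Suc t) (relrank \<sigma> t) / (1 - p * prefix_mass x (Suc t))"
  using assms relrank_bounds[of t \<sigma>] length_perm_interval[OF assms(1)]
  by (simp add: lp_policy_clipped_def last_take_rel_ranks lp_policy_take_rel_ranks)

lemma lp_value_le_opt_robust_ratio:
  assumes "1 \<le> n" "0 < p" "p \<le> 1"
  shows "lp_value n p \<le> opt_robust_ratio n p"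
  unfolding lp_value_def
proof (rule cSup_least)
  show "{\<gamma>. \<exists>x. lp_feasible n p x \<gamma>} \<noteq> {}" using lp_feasible_zero by blast
next
  fix \<gamma> assume "\<gamma> \<in> {\<gamma>. \<exists>x. lp_feasible n p x \<gamma>}"
  then obtain x where f: "lp_feasible n p x \<gamma>" by blast
  have "bdd_above (robust_ratio n p ` policies)"
    using robust_ratio_le_lp_value[OF _ assms] by (auto intro!: bdd_aboveI)
  hence "robust_ratio n p (lp_policy_clipped n p x) \<le> opt_robust_ratio n p"
    unfolding opt_robust_ratio_def by (rule cSUP_upper[OF lp_policy_clipped_in_policies[OF f]])
  moreover have "\<gamma> \<le> robust_ratio n p (lp_policy_clipped n p x)"
    using f assms(1) by (rule lp_rule_robust) (rule lp_policy_clipped_take_rel_ranks)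
  ultimately show "\<gamma> \<le> opt_robust_ratio n p" by linarith
qed

lemma opt_robust_ratio_le_lp_value:
  assumes "1 \<le> n" "0 < p" "p \<le> 1"
  shows "opt_robust_ratio n p \<le> lp_value n p"
proof -
  have "(\<lambda>_ _. 0) \<in> policies" by (simp add: policies_def)
  thus ?thesis
    unfolding opt_robust_ratio_def using robust_ratio_le_lp_value[OF _ assms]
    by (intro cSUP_least) auto
qed

theorem theorem2:
  fixes n :: nat and p :: real
  assumes "1 \<le> n" and "0 < p" and "p \<le> 1"
  shows "opt_robust_ratio n p = lp_value n p \<and>
         (\<forall>x \<gamma>. lp_optimal n p x \<gamma> \<longrightarrow> is_robust n p (opt_robust_ratio n p) (lp_policy p x))"
proof (intro conjI allI impI)
  show opt: "opt_robust_ratio n p = lp_value n p"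
    using opt_robust_ratio_le_lp_value[OF assms] lp_value_le_opt_robust_ratio[OF assms] by simp
  fix x \<gamma> assume "lp_optimal n p x \<gamma>"
  hence "lp_value n p = \<gamma>" and "lp_feasible n p x \<gamma>"
    by (auto simp: lp_value_eq_optimal lp_optimal_def)
  moreover have "\<gamma> \<le> robust_ratio n p (lp_policy p x)"
    using \<open>lp_feasible n p x \<gamma>\<close> assms(1) by (rule lp_rule_robust) (rule lp_policy_take_rel_ranks)
  ultimately show "is_robust n p (opt_robust_ratio n p) (lp_policy p x)"
    unfolding is_robust_def opt by simp
qed

end
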